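(* Let $r\ge 1$, $m=2^r$, and let $n$ be a positive integer with $m\mid n$. Let $b$ be a positive integer having property $\mathcal{P}$ with respect to $n$. If $x^n+b^m$ is reducible over $\mathbb{Z}$, then both $b$ and $n/m$ are even.
   Context: For a positive integer $N$, a positive integer $b$ has property $\mathcal{P}$ with respect to $N$ if either $b$ is a prime number, or $b=(p_1^{b_1}p_2^{b_2}\cdots p_k^{b_k})^d$ where $k\ge 2$, $p_1,\dots,p_k$ are distinct primes, $b_1,\dots,b_k\ge 1$, $\gcd(b_1,\ldots,b_k)=1$, and $d$ is a positive integer with $\gcd(d,N)=1$. A monic polynomial in $\mathbb{Z}[x]$ of degree $\ge 1$ is reducible over $\mathbb{Z}$ if it is a product of two polynomials in $\mathbb{Z}[x]$ of degree at least $1$. *)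

theory Defs
  imports "HOL-Computational_Algebra.Computational_Algebra"
begin

definition property_P :: "nat \<Rightarrow> nat \<Rightarrow> bool" where
  "property_P N b \<longleftrightarrow>
     prime b \<or>
     (\<exists>(S::nat set) (e::nat \<Rightarrow> nat) (d::nat).
        finite S \<and> card S \<ge> 2 \<and> (\<forall>p\<in>S. prime p) \<and>
        (\<forall>p\<in>S. e p \<ge> 1) \<and> Gcd (e ` S) = 1 \<and>
        d > 0 \<and> coprime d N \<and>
        b = (\<Prod>p\<in>S. p ^ e p) ^ d)"

definition reducible_Z :: "int poly \<Rightarrow> bool" where
  "reducible_Z f \<longleftrightarrow> (\<exists>g h. f = g * h \<and> degree g \<ge> 1 \<and> degree h \<ge> 1)"

end

theory Submission
  imports Defs "HOL-Algebra.Finite_Extensions"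
    "Berlekamp_Zassenhaus.Reconstruction"
begin

text \<open>
  Suppose not, write \<open>n = m k\<close>, and let \<open>q\<close> be an irreducible factor over \<open>\<rat>\<close> of \<open>x\<^sup>n + b\<^sup>m\<close>
  of degree \<open>0 < j < n\<close>, with a complex root \<open>\<alpha>\<close>. By Gauss's lemma \<open>q\<close> lifts to a monic integer
  factor, whose constant term \<open>c\<close> satisfies \<open>|c|\<^sup>n = b\<^bsup>m j\<^esup>\<close> because all roots of \<open>x\<^sup>n + b\<^sup>m\<close> have
  modulus \<open>b\<^bsup>m/n\<^esup>\<close>; hence \<open>|c|\<^sup>k = b\<^sup>j\<close>, and property \<open>\<P>\<close> forces \<open>k\<close> to divide \<open>j\<close>.

  Each polynomial \<open>x\<^bsup>2\<^sup>s\<^esup> + c\<close> with \<open>s \<ge> 1\<close> and \<open>c \<equiv> 1 (mod 4)\<close> is irreducible, by Eisenstein at 2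
  after the shift \<open>x \<mapsto> x + 1\<close>. If \<open>b\<close> is odd, take \<open>2\<^sup>e\<close> the exact power of 2 dividing \<open>n\<close>:
  \<open>\<alpha>\<^bsup>n/2\<^sup>e\<^esup> \<in> \<rat>(\<alpha>)\<close> is a root of \<open>x\<^bsup>2\<^sup>e\<^esup> + b\<^sup>m\<close>, so \<open>2\<^sup>e\<close> divides \<open>j\<close> by the tower law, and the odd part
  of \<open>n\<close> divides \<open>k\<close>. If \<open>k\<close> is odd, \<open>\<alpha>\<^sup>k/b\<close> is a root of \<open>x\<^sup>m + 1\<close>, so \<open>m\<close> divides \<open>j\<close>. Either way
  \<open>n\<close> divides \<open>j\<close>, which is impossible.
\<close>

hide_const (open) up_ring.monom Polynomials.degree Polynomials.lead_coeff
  Divisibility.irreducible Divisibility.prime up_ring.coeff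

definition complex_ring :: "complex ring" where
  "complex_ring = \<lparr>carrier = UNIV, monoid.mult = (*), one = 1, zero = 0, add = (+)\<rparr>"

lemma field_complex_ring: "field complex_ring"
proof -
  have "\<exists>y. x + y = 0" for x :: complex
    by (rule exI[of _ "- x"]) simp
  moreover have "x \<noteq> 0 \<Longrightarrow> \<exists>y. x * y = 1" for x :: complex
    by (rule exI[of _ "inverse x"]) simp
  ultimately show ?thesis
    unfolding complex_ring_def by unfold_locales (auto simp: algebra_simps Units_def)
qed

interpretation C: domain complex_ring
  using field_complex_ring by (rule field.axioms(1))

lemma complex_ring_simps [simp]:
  "carrier complex_ring = UNIV" "x \<otimes>\<^bsub>complex_ring\<^esub> y = x * y" "x \<oplus>\<^bsub>complex_ring\<^esub> y = x + y"
  "\<one>\<^bsub>complex_ring\<^esub> = 1" "\<zero>\<^bsub>complex_ring\<^esub> = 0"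
  by (simp_all add: complex_ring_def)

lemma complex_ring_nat_pow [simp]: "x [^]\<^bsub>complex_ring\<^esub> (n::nat) = x ^ n"
  by (induction n) (simp_all add: mult.commute)

lemma complex_ring_neg [simp]: "\<ominus>\<^bsub>complex_ring\<^esub> x = - x"
  using C.add.inv_equality[of "- x" x] by simp

lemma complex_ring_inv [simp]: "x \<noteq> 0 \<Longrightarrow> inv\<^bsub>complex_ring\<^esub> x = inverse x"
  using C.comm_inv_char[of x "inverse x"] by simp

lemma subfield_Rats_complex_ring: "subfield \<rat> complex_ring"
  by (rule field.subfieldI'[OF field_complex_ring C.subringI]) auto

lemma subring_Rats_complex_ring: "subring \<rat> complex_ring"
  using subfieldE(1)[OF subfield_Rats_complex_ring] .

lemma eval_complex_ring_eq_poly: "C.eval xs z = poly (Poly (rev xs)) z"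
  by (induction xs) (auto simp: Poly_append poly_monom mult.commute)

text \<open>A rational polynomial as an element of \<open>\<rat>[X]\<close> inside the field \<open>\<complex>\<close> of HOL-Algebra,
  where polynomials are coefficient lists with the leading coefficient first.\<close>
definition coeff_list :: "rat poly \<Rightarrow> complex list" where
  "coeff_list p = rev (coeffs (map_poly of_rat p))"

lemma coeff_list_carrier: "coeff_list p \<in> carrier (\<rat>[X]\<^bsub>complex_ring\<^esub>)"
  by (cases "p = 0")
    (auto simp: coeff_list_def univ_poly_def polynomial_def hd_rev last_map last_coeffs_eq_coeff_degree)

lemma coeff_list_eq_Nil_iff [simp]: "coeff_list p = [] \<longleftrightarrow> p = 0"
  by (simp add: coeff_list_def)

lemma length_coeff_list [simp]: "length (coeff_list p) = length (coeffs p)"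
  by (simp add: coeff_list_def)

lemma eval_complex_ring_coeff_list [simp]: "C.eval (coeff_list p) z = poly (map_poly of_rat p) z"
  by (simp only: coeff_list_def eval_complex_ring_eq_poly rev_rev_ident Poly_coeffs)

lemma Poly_Rats_list:
  assumes "set cs \<subseteq> \<rat>"
  obtains p where "map_poly of_rat p = (Poly cs :: complex poly)"
  using assms
proof (induction cs arbitrary: thesis)
  case (Cons c cs)
  obtain p where p: "map_poly of_rat p = Poly cs"
    using Cons.IH Cons.prems(2) by auto
  obtain r where "c = of_rat r"
    using Cons.prems(2) by (auto elim: Rats_cases)
  then have "map_poly of_rat (pCons r p) = Poly (c # cs)"
    using p by (simp add: of_rat_hom.map_poly_pCons_hom)
  then show ?case
    using Cons.prems(1) by blast
qed simp

lemma coeff_list_surj: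
  assumes "xs \<in> carrier (\<rat>[X]\<^bsub>complex_ring\<^esub>)"
  obtains p where "coeff_list p = xs"
proof -
  have Rats: "set (rev xs) \<subseteq> \<rat>" and hd: "xs \<noteq> [] \<Longrightarrow> hd xs \<noteq> 0"
    using assms by (auto simp: univ_poly_def polynomial_def)
  obtain p where p: "map_poly of_rat p = Poly (rev xs)"
    using Poly_Rats_list[OF Rats] by blast
  have "coeff_list p = dropWhile ((=) 0) xs"
    by (simp add: coeff_list_def p)
  also have "\<dots> = xs"
    using hd by (cases xs) auto
  finally show thesis
    using that by blast
qed

lemma root_imp_algebraic_over_Rats:
  assumes "p \<noteq> 0" "poly (map_poly of_rat p) z = 0"
  shows "(C.algebraic over \<rat>) z"
  using C.algebraicI[OF coeff_list_carrier, of p z] assms by (simp add: over_def)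

lemma map_poly_of_rat_mult:
  "map_poly (of_rat :: rat \<Rightarrow> 'a::field_char_0) (p * q) = map_poly of_rat p * map_poly of_rat q"
  by (rule poly_eqI) (simp add: coeff_mult of_rat_sum of_rat_mult coeff_map_poly)

lemma irreducible_dvd_of_common_root:
  fixes p q :: "rat poly" and z :: complex
  assumes irr: "irreducible p" and "poly (map_poly of_rat p) z = 0" "poly (map_poly of_rat q) z = 0"
  shows "p dvd q"
proof (rule ccontr)
  assume "\<not> p dvd q"
  then have "coprime p q"
    using irr by (meson coprimeI dvd_trans irreducibleD')
  then have "gcd p q = 1"
    by simp
  then obtain a b where ab: "a * p + b * q = 1"
    using bezout_coefficients_fst_snd by metis
  have "poly (map_poly of_rat (a * p + b * q)) z = 0"
    using assms(2,3) by (simp add: of_rat_hom.map_poly_hom_add map_poly_of_rat_mult)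
  then show False by (simp add: ab)
qed

lemma degree_Irr_eq:
  fixes p :: "rat poly" and z :: complex
  assumes irr: "irreducible p" and root: "poly (map_poly of_rat p) z = 0"
  shows "Polynomials.degree (C.Irr \<rat> z) = degree p"
proof -
  have p0: "p \<noteq> 0" using irr by auto
  have alg: "(C.algebraic over \<rat>) z"
    using root_imp_algebraic_over_Rats[OF p0 root] .
  note Irr = C.IrrE[OF subfield_Rats_complex_ring _ alg, simplified]
  have "C.Irr \<rat> z pdivides\<^bsub>complex_ring\<^esub> coeff_list p"
    using C.Irr_minimal[OF subfield_Rats_complex_ring _ alg coeff_list_carrier] root by simp
  then have le: "Polynomials.degree (C.Irr \<rat> z) \<le> degree p"
    using C.pdivides_imp_degree_le[OF subring_Rats_complex_ring Irr(1) coeff_list_carrier] p0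
    by (simp add: length_coeffs_degree)
  obtain q where q: "coeff_list q = C.Irr \<rat> z"
    using coeff_list_surj[OF Irr(1)] .
  have "C.Irr \<rat> z \<noteq> []"
    using Irr(2) by (auto simp: ring_irreducible_def univ_poly_zero)
  then have q0: "q \<noteq> 0"
    using q by (metis coeff_list_eq_Nil_iff)
  moreover have "p dvd q"
    using irreducible_dvd_of_common_root[OF irr root] Irr(4) q by (metis eval_complex_ring_coeff_list)
  ultimately have "degree p \<le> degree q"
    by (rule dvd_imp_degree_le[rotated])
  moreover have "Polynomials.degree (C.Irr \<rat> z) = degree q"
    using q q0 by (metis length_coeff_list length_coeffs_degree diff_Suc_1)
  ultimately show ?thesis
    using le by simp
qed

lemma degree_dvd_of_root_in_simple_extension:
  fixes p q :: "rat poly" and \<alpha> \<gamma> :: complex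
  assumes irr_q: "irreducible q" and q_root: "poly (map_poly of_rat q) \<alpha> = 0"
    and irr_p: "irreducible p" and p_root: "poly (map_poly of_rat p) \<gamma> = 0"
    and \<gamma>: "\<gamma> \<in> C.simple_extension \<rat> \<alpha>"
  shows "degree p dvd degree q"
proof -
  define E where "E = C.simple_extension \<rat> \<alpha>"
  define F where "F = C.simple_extension \<rat> \<gamma>"
  have alg_\<alpha>: "(C.algebraic over \<rat>) \<alpha>" and alg_\<gamma>: "(C.algebraic over \<rat>) \<gamma>"
    using root_imp_algebraic_over_Rats irr_p irr_q q_root p_root by auto
  have F: "subfield F complex_ring"
    using C.simple_extension_is_subfield[OF subfield_Rats_complex_ring] alg_\<gamma> by (simp add: F_def)
  have Rats_F: "\<rat> \<subseteq> F"
    using C.simple_extension_incl[of \<rat> \<gamma>] by (simp add: F_def)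
  have "F \<subseteq> E"
    using C.simple_extension_subring_incl[OF C.simple_extension_is_subring[OF subring_Rats_complex_ring]]
      C.simple_extension_incl[of \<rat> \<alpha>] \<gamma> by (simp add: F_def E_def)
  \<comment> \<open>adjoining \<open>\<alpha>\<close> to \<open>F\<close> gives back \<open>E\<close>, since \<open>\<rat> \<subseteq> F \<subseteq> E\<close>\<close>
  then have "C.simple_extension F \<alpha> \<subseteq> E"
    using C.simple_extension_subring_incl[OF C.simple_extension_is_subring[OF subring_Rats_complex_ring]]
      C.simple_extension_mem[OF subring_Rats_complex_ring] by (simp add: E_def)
  moreover have "E \<subseteq> C.simple_extension F \<alpha>"
    using C.simple_extension_subring_incl[OF C.simple_extension_is_subring[OF subfieldE(1)[OF F]]]
      C.simple_extension_incl[of F \<alpha>] C.simple_extension_mem[OF subfieldE(1)[OF F]] Rats_F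
    by (simp add: E_def)
  ultimately have EF: "C.simple_extension F \<alpha> = E" by blast
  have "C.finite_dimension F (C.simple_extension F \<alpha>)"
    using C.finite_dimension_simple_extension[OF F] C.algebraic_mono[OF Rats_F alg_\<alpha>] by simp
  then have FE: "C.finite_dimension F E"
    by (simp only: EF)
  have QF: "C.finite_dimension \<rat> F"
    using C.finite_dimension_simple_extension[OF subfield_Rats_complex_ring] alg_\<gamma> by (simp add: F_def)
  have "(C.dim over \<rat>) E = (C.dim over \<rat>) F * (C.dim over F) E"
    using C.telescopic_base_dim(2)[OF subfield_Rats_complex_ring F QF FE] .
  moreover have "(C.dim over \<rat>) E = degree q" "(C.dim over \<rat>) F = degree p"
    using C.simple_extension_dim[OF subfield_Rats_complex_ring] alg_\<alpha> alg_\<gamma>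
      degree_Irr_eq[OF irr_q q_root] degree_Irr_eq[OF irr_p p_root] by (simp_all add: E_def F_def)
  ultimately show ?thesis
    by (metis dvd_triv_left)
qed

lemma of_rat_mult_power_in_simple_extension:
  "of_rat a * \<alpha> ^ i \<in> C.simple_extension \<rat> \<alpha>"
proof -
  have sub: "subring (C.simple_extension \<rat> \<alpha>) complex_ring"
    using C.simple_extension_is_subring[OF subring_Rats_complex_ring] by simp
  have "\<alpha> ^ i \<in> C.simple_extension \<rat> \<alpha>"
  proof (induction i)
    case (Suc i)
    then show ?case
      using subringE(6)[OF sub, of \<alpha> "\<alpha> ^ i"] C.simple_extension_mem[OF subring_Rats_complex_ring] by simp
  qed (use subringE(3)[OF sub] in simp)
  moreover have "of_rat a \<in> C.simple_extension \<rat> \<alpha>"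
    using C.simple_extension_incl[of \<rat> \<alpha>] by auto
  ultimately show ?thesis
    using subringE(6)[OF sub, of "of_rat a" "\<alpha> ^ i"] by simp
qed

lemma even_pow2_choose:
  assumes "0 < i" "i < 2 ^ s"
  shows "even (2 ^ s choose i)"
proof (rule ccontr)
  assume odd: "odd (2 ^ s choose i)"
  have "i * (2 ^ s choose i) = 2 ^ s * (2 ^ s - 1 choose (i - 1))"
    using times_binomial_minus1_eq[OF assms(1)] .
  then have "2 ^ s dvd i * (2 ^ s choose i)"
    by simp
  moreover have "Rings.coprime ((2::nat) ^ s) (2 ^ s choose i)"
    using odd by simp
  ultimately have "2 ^ s dvd i"
    using coprime_dvd_mult_left_iff by blast
  then show False
    using assms by (simp add: nat_dvd_not_less)
qed

lemma odd_power_even_mod_4: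
  fixes x :: int
  assumes "odd x" "even m"
  shows "x ^ m mod 4 = 1"
proof -
  obtain t where "x = 2 * t + 1"
    using assms(1) by (blast elim: oddE)
  then have x2: "x ^ 2 = 4 * (t * t + t) + 1"
    by (simp add: power2_eq_square algebra_simps)
  have "(4 * u + 1) mod 4 = (1::int)" for u
    by presburger
  then have "x ^ 2 mod 4 = 1"
    unfolding x2 .
  have "x ^ m = (x ^ 2) ^ (m div 2)"
    using assms(2) by (simp flip: power_mult)
  also have "\<dots> mod 4 = (x ^ 2 mod 4) ^ (m div 2) mod 4"
    by (rule power_mod[symmetric])
  finally show ?thesis
    using \<open>x ^ 2 mod 4 = 1\<close> by simp
qed

lemma map_poly_of_int_binomial:
  "map_poly (of_int :: int \<Rightarrow> 'a::{comm_ring_1,ring_char_0}) (monom 1 n + [:B:]) = monom 1 n + [:of_int B:]"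
  by (simp add: map_poly_monom of_int_hom.map_poly_hom_add of_int_hom.map_poly_pCons_hom)

lemma Eisenstein_constant_factor:
  fixes A B Q :: "int poly" and p :: int
  assumes p: "prime p" and Q: "Q = A * B"
    and A0: "p dvd coeff A 0" and B0: "\<not> p dvd coeff B 0"
    and lc: "\<not> p dvd lead_coeff Q" and low: "\<forall>i < degree Q. p dvd coeff Q i"
  shows "degree B = 0"
proof -
  have "Q \<noteq> 0"
    using lc by auto
  then have "A \<noteq> 0" "B \<noteq> 0"
    using Q by auto
  then have deg: "degree Q = degree A + degree B"
    using Q by (simp add: degree_mult_eq)
  have "lead_coeff Q = lead_coeff A * lead_coeff B"
    using Q by (simp add: lead_coeff_mult)
  then have "\<not> p dvd coeff A (degree A)"
    using lc by auto
  \<comment> \<open>the first coefficient of \<open>A\<close> not divisible by \<open>p\<close> produces one of \<open>Q\<close>\<close>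
  define s where "s = (LEAST i. \<not> p dvd coeff A i)"
  have As: "\<not> p dvd coeff A s"
    unfolding s_def by (rule LeastI) fact
  have s: "s \<le> degree A"
    unfolding s_def by (rule Least_le) fact
  have below: "p dvd coeff A i" if "i < s" for i
    using not_less_Least[of i "\<lambda>i. \<not> p dvd coeff A i"] that unfolding s_def by blast
  have "coeff Q s = (\<Sum>i\<in>{..<s}. coeff A i * coeff B (s - i)) + coeff A s * coeff B 0"
    using Q by (simp add: coeff_mult flip: lessThan_Suc_atMost)
  moreover have "p dvd (\<Sum>i\<in>{..<s}. coeff A i * coeff B (s - i))"
    by (rule dvd_sum) (simp add: below)
  moreover have "\<not> p dvd coeff A s * coeff B 0"
    using p As B0 by (simp add: prime_dvd_mult_iff)
  ultimately have "\<not> p dvd coeff Q s"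
    by (simp add: dvd_add_right_iff)
  then have "degree Q \<le> s"
    using low by (meson not_le)
  then show ?thesis
    using deg s by simp
qed

lemma Eisenstein_criterion:
  fixes A B Q :: "int poly" and p :: int
  assumes p: "prime p" and Q: "Q = A * B"
    and lc: "\<not> p dvd lead_coeff Q" and low: "\<forall>i < degree Q. p dvd coeff Q i"
    and const: "\<not> p ^ 2 dvd coeff Q 0"
  shows "degree A = 0 \<or> degree B = 0"
proof (cases "degree Q = 0")
  case True
  have "Q \<noteq> 0"
    using lc by auto
  then show ?thesis
    using True Q by (simp add: degree_mult_eq)
next
  case False
  then have "p dvd coeff A 0 * coeff B 0"
    using low[rule_format, of 0] Q by (simp add: coeff_mult_0)
  moreover have "\<not> (p dvd coeff A 0 \<and> p dvd coeff B 0)"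
    using const Q by (auto simp: coeff_mult_0 power2_eq_square mult_dvd_mono)
  ultimately consider "p dvd coeff A 0" "\<not> p dvd coeff B 0" | "p dvd coeff B 0" "\<not> p dvd coeff A 0"
    using p by (auto simp: prime_dvd_mult_iff)
  then show ?thesis
  proof cases
    case 1
    then show ?thesis
      using Eisenstein_constant_factor[OF p Q _ _ lc low] by simp
  next
    case 2
    then show ?thesis
      using Eisenstein_constant_factor[OF p _ _ _ lc low, of B A] Q by (simp add: mult.commute)
  qed
qed

lemma irreducible_binomial_pow2:
  fixes c :: int
  assumes s: "s \<ge> 1" and c: "c mod 4 = 1"
  shows "irreducible (monom 1 (2 ^ s) + [:of_int c:] :: rat poly)"
proof -
  define M :: nat where "M = 2 ^ s"
  have M: "M \<ge> 2"
    using power_increasing[OF s, of "2::nat"] by (simp add: M_def)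
  define F :: "int poly" where "F = monom 1 M + [:c:]"
  define P :: "rat poly" where "P = monom 1 M + [:of_int c:]"
  have FP: "map_poly of_int F = P"
    by (simp add: F_def P_def map_poly_of_int_binomial)
  have deg_P: "degree P = M"
    using M by (simp add: P_def degree_add_eq_left degree_monom_eq)
  \<comment> \<open>\<open>F(x + 1) = (x + 1)\<^sup>M + c\<close> is Eisenstein at 2: its middle coefficients \<open>M choose i\<close> are even
      and its constant term \<open>1 + c\<close> is \<open>2\<close> modulo \<open>4\<close>\<close>
  define Q where "Q = F \<circ>\<^sub>p [:1, 1:]"
  have Q: "Q = [:1, 1:] ^ M + [:c:]"
    by (simp add: Q_def F_def pcompose_add monom_altdef pcompose_smult pcompose_hom.hom_power)
  have "degree ([:1, 1:] ^ M :: int poly) = M"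
    by (rule degree_linear_power)
  then have deg_Q: "degree Q = M"
    unfolding Q using M by (subst degree_add_eq_left) auto
  have coeff_Q: "coeff Q i = int (M choose i) + (if i = 0 then c else 0)" if "i \<le> M" for i
  proof -
    have "coeff ([:1, 1:] ^ M :: int poly) i = int (M choose i)"
      using coeff_linear_poly_power[of i M "1::int" 1] that by simp
    then show ?thesis
      unfolding Q by (simp add: coeff_pCons split: nat.split)
  qed
  have coeff_Q_0: "coeff Q 0 = 4 * (c div 4) + 2"
    using coeff_Q[of 0] c by simp presburger
  have lc: "\<not> 2 dvd lead_coeff Q"
    using deg_Q coeff_Q[of M] M by simp
  have low: "\<forall>i < degree Q. 2 dvd coeff Q i"
  proof (intro allI impI)
    fix i assume "i < degree Q"
    then show "2 dvd coeff Q i"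
      using coeff_Q[of i] even_pow2_choose[of i s] coeff_Q_0 deg_Q
      by (cases "i = 0") (simp_all add: M_def)
  qed
  have "\<not> 4 dvd 4 * (c div 4) + 2"
    by presburger
  then have const: "\<not> 2 ^ 2 dvd coeff Q 0"
    by (simp add: coeff_Q_0)
  have "P \<noteq> 0" "\<not> is_unit P"
    using deg_P M by auto
  moreover have "is_unit a \<or> is_unit b" if ab: "P = a * b" for a b
  proof -
    have "a \<noteq> 0" "b \<noteq> 0"
      using ab \<open>P \<noteq> 0\<close> by auto
    obtain a' b' where F: "F = a' * b'" and deg: "degree a' = degree a" "degree b' = degree b"
      using rat_to_int_factor[of F a b] ab FP by auto
    have "Q = (a' \<circ>\<^sub>p [:1, 1:]) * (b' \<circ>\<^sub>p [:1, 1:])"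
      by (simp add: Q_def F pcompose_mult)
    from Eisenstein_criterion[OF _ this lc low const] have "degree a' = 0 \<or> degree b' = 0"
      by simp
    then show ?thesis
      using deg \<open>a \<noteq> 0\<close> \<open>b \<noteq> 0\<close> by auto
  qed
  ultimately have "irreducible P"
    by (rule Factorial_Ring.irreducibleI)
  then show ?thesis
    unfolding P_def M_def .
qed

lemma norm_coeff_0_eq_if_roots_on_circle:
  fixes p :: "complex poly" and \<beta> :: real
  assumes "p \<noteq> 0" "\<And>z. poly p z = 0 \<Longrightarrow> cmod z = \<beta>"
  shows "cmod (coeff p 0) = cmod (lead_coeff p) * \<beta> ^ degree p"
  using assms
proof (induction "degree p" arbitrary: p)
  case (Suc d)
  have "\<not> constant (poly p)"
    using Suc.hyps(2) by (simp add: constant_degree)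
  then obtain z where "poly p z = 0"
    using fundamental_theorem_of_algebra by blast
  then obtain r where p_eq: "p = [:-z, 1:] * r"
    by (metis dvdE poly_eq_0_iff_dvd)
  then have "r \<noteq> 0"
    using Suc.prems(1) by auto
  then have "degree p = Suc (degree r)"
    unfolding p_eq by (subst degree_mult_eq) auto
  then have "degree r = d"
    using Suc.hyps(2) by simp
  moreover have "cmod w = \<beta>" if "poly r w = 0" for w
    using Suc.prems(2)[of w] that p_eq by simp
  ultimately have "cmod (coeff r 0) = cmod (lead_coeff r) * \<beta> ^ d"
    using Suc.hyps(1) \<open>r \<noteq> 0\<close> by blast
  moreover have "cmod z = \<beta>"
    using Suc.prems(2) \<open>poly p z = 0\<close> by blast
  moreover have "coeff p 0 = - z * coeff r 0"
    using p_eq by (simp add: coeff_mult_0)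
  moreover have "lead_coeff p = lead_coeff r"
    unfolding p_eq lead_coeff_mult by simp
  ultimately show ?case
    using \<open>degree r = d\<close> Suc.hyps(2)[symmetric] by (simp add: norm_mult)
qed simp

text \<open>All roots of \<open>x\<^sup>n + B\<close> have modulus \<open>B\<^bsup>1/n\<^esup>\<close>.\<close>
lemma abs_coeff_0_power_of_binomial_factor:
  fixes g h :: "int poly" and B :: int
  assumes f: "monom 1 n + [:B:] = g * h" and n: "n > 0" and B: "B > 0"
  shows "\<bar>coeff g 0\<bar> ^ n = B ^ degree g"
proof -
  define \<beta> where "\<beta> = root n (real_of_int B)"
  have deg: "degree (monom 1 n + [:B:] :: int poly) = n"
    using n by (simp add: degree_add_eq_left degree_monom_eq)
  then have "lead_coeff (monom 1 n + [:B:]) = 1"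
    using n by (simp add: coeff_pCons split: nat.split)
  then have "lead_coeff g * lead_coeff h = 1"
    using f by (simp add: lead_coeff_mult)
  then have lc: "\<bar>lead_coeff g\<bar> = 1"
    using abs_zmult_eq_1[of "lead_coeff g" "lead_coeff h"] by simp
  have "g \<noteq> 0"
    using f deg n by auto
  have "cmod z = \<beta>" if "poly (map_poly of_int g) z = 0" for z :: complex
  proof -
    have "poly (map_poly of_int (monom 1 n + [:B:])) z = 0"
      using that by (simp add: f of_int_poly_hom.hom_mult)
    then have "z ^ n = - of_int B"
      by (simp add: map_poly_of_int_binomial poly_monom eq_neg_iff_add_eq_0)
    then have "cmod (z ^ n) = cmod (- (of_int B :: complex))"
      by simp
    also have "\<dots> = real_of_int B"
      using B by simp
    finally have "cmod z ^ n = real_of_int B"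
      by (simp add: norm_power)
    from real_root_pos_unique[OF n norm_ge_zero this] show ?thesis
      by (simp add: \<beta>_def)
  qed
  then have "cmod (coeff (map_poly of_int g) 0) = cmod (lead_coeff (map_poly of_int g)) * \<beta> ^ degree g"
    using norm_coeff_0_eq_if_roots_on_circle[of "map_poly of_int g" \<beta>] \<open>g \<noteq> 0\<close> by simp
  moreover have "\<bar>real_of_int (lead_coeff g)\<bar> = 1"
    using lc by (metis of_int_abs of_int_1)
  ultimately have "\<bar>real_of_int (coeff g 0)\<bar> = \<beta> ^ degree g"
    by simp
  then have "\<bar>real_of_int (coeff g 0)\<bar> ^ n = (\<beta> ^ n) ^ degree g"
    by (simp flip: power_mult add: mult.commute)
  also have "\<beta> ^ n = real_of_int B"
    using n B by (simp add: \<beta>_def)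
  finally have "real_of_int (\<bar>coeff g 0\<bar> ^ n) = real_of_int (B ^ degree g)"
    by simp
  then show ?thesis
    by (simp only: of_int_eq_iff)
qed

lemma property_P_power_eq_imp_dvd:
  fixes N b c k j :: nat
  assumes P: "property_P N b" and b: "b > 0" and eq: "c ^ k = b ^ j"
    and k: "k dvd N" "k > 0"
  shows "k dvd j"
proof -
  have "c \<noteq> 0"
  proof
    assume "c = 0"
    then have "b ^ j = 0"
      using eq k(2) by (simp add: zero_power)
    then show False
      using b by simp
  qed
  have mult_b: "multiplicity p (b ^ j) = k * multiplicity p c" if "prime p" for p
  proof -
    have "multiplicity p (b ^ j) = multiplicity p (c ^ k)"
      by (simp only: eq)
    also have "\<dots> = k * multiplicity p c"
      by (rule prime_elem_multiplicity_power_distrib) (use that \<open>c \<noteq> 0\<close> in auto)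
    finally show ?thesis .
  qed
  from P consider "prime b"
    | S e d where "finite S" "\<forall>p\<in>S. prime p" "Gcd (e ` S) = 1" "Rings.coprime d N"
        "b = (\<Prod>p\<in>S. p ^ e p) ^ d"
    unfolding property_P_def by blast
  then show ?thesis
  proof cases
    case 1
    then have "j = k * multiplicity b c"
      using mult_b[of b] by (simp add: multiplicity_same_power)
    then show ?thesis
      by simp
  next
    case 2
    have "k dvd (j * d) * e p" if "p \<in> S" for p
    proof -
      have p: "prime p"
        using 2(2) that by blast
      have "(\<Prod>p\<in>S. p ^ e p) > 0"
        using 2(2) by (intro prod_pos) (auto intro: prime_gt_0_nat)
      moreover have "multiplicity p (\<Prod>p\<in>S. p ^ e p) = e p"
        using multiplicity_prod_prime_powers[OF 2(1) _ p, of e] 2(2) that by auto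
      ultimately have "multiplicity p b = d * e p"
        using p 2(5) by (simp add: prime_elem_multiplicity_power_distrib)
      then have "multiplicity p (b ^ j) = (j * d) * e p"
        using p b by (simp add: prime_elem_multiplicity_power_distrib)
      then show ?thesis
        using mult_b[OF p] by (metis dvd_triv_left)
    qed
    then have "k dvd Gcd ((\<lambda>p. (j * d) * e p) ` S)"
      by (auto intro: Gcd_greatest)
    also have "(\<lambda>p. (j * d) * e p) ` S = (*) (j * d) ` (e ` S)"
      by auto
    also have "Gcd \<dots> = j * d"
      using 2(3) by (simp add: Gcd_mult)
    finally have "k dvd j * d" .
    moreover have "Rings.coprime k d"
    proof -
      obtain t where "N = k * t"
        using k(1) by (elim dvdE)
      then show ?thesis
        using 2(4) by (simp add: Rings.coprime_commute)
    qed
    ultimately show ?thesis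
      using coprime_dvd_mult_left_iff by blast
  qed
qed

lemma reducible_binomial_imp_irreducible_factor:
  fixes B :: int
  assumes red: "reducible_Z (monom 1 n + [:B:])" and n: "n > 0"
  obtains q :: "rat poly" where "irreducible q" "q dvd monom 1 n + [:of_int B:]" "degree q < n"
proof -
  obtain g h where gh: "monom 1 n + [:B:] = g * h" "degree g \<ge> 1" "degree h \<ge> 1"
    using red unfolding reducible_Z_def by blast
  then have "g \<noteq> 0" "h \<noteq> 0"
    by auto
  moreover have "degree (monom 1 n + [:B:]) = n"
    using n by (simp add: degree_add_eq_left degree_monom_eq)
  ultimately have "degree g < n"
    using gh by (simp add: degree_mult_eq)
  define G where "G = map_poly rat_of_int g"
  have "G \<noteq> 0" "\<not> is_unit G"
    using gh(2) \<open>g \<noteq> 0\<close> by (auto simp: G_def)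
  then obtain q where q: "prime q" "q dvd G"
    using prime_divisor_exists by blast
  have "(monom 1 n + [:of_int B:] :: rat poly) = map_poly of_int (g * h)"
    by (simp add: map_poly_of_int_binomial flip: gh(1))
  also have "\<dots> = G * map_poly of_int h"
    by (simp add: G_def of_int_poly_hom.hom_mult)
  finally have "monom 1 n + [:of_int B:] = G * map_poly of_int h" .
  then have "q dvd monom 1 n + [:of_int B:]"
    using q(2) by (metis dvd_mult2)
  moreover have "degree q < n"
    using dvd_imp_degree_le[OF q(2) \<open>G \<noteq> 0\<close>] \<open>degree g < n\<close> by (simp add: G_def)
  ultimately show thesis
    using that q(1) by (metis prime_elem_imp_irreducible prime_imp_prime_elem)
qed

lemma root_of_binomial_factor:
  fixes q :: "rat poly" and B :: rat
  assumes q: "irreducible q" "q dvd monom 1 n + [:B:]"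
  obtains \<alpha> :: complex where "poly (map_poly of_rat q) \<alpha> = 0" "\<alpha> ^ n = - of_rat B"
proof -
  have "degree q \<noteq> 0"
    using q(1) by (auto simp: irreducible_def)
  then have "\<not> constant (poly (map_poly (of_rat :: rat \<Rightarrow> complex) q))"
    by (simp add: constant_degree)
  then obtain \<alpha> :: complex where \<alpha>: "poly (map_poly of_rat q) \<alpha> = 0"
    using fundamental_theorem_of_algebra by blast
  obtain f where "monom 1 n + [:B:] = q * f"
    using q(2) by (elim dvdE)
  then have "poly (map_poly of_rat (monom 1 n + [:B:])) \<alpha> = 0"
    using \<alpha> by (simp add: map_poly_of_rat_mult)
  then have "\<alpha> ^ n = - of_rat B"
    by (simp add: map_poly_monom poly_monom of_rat_hom.map_poly_hom_add
        of_rat_hom.map_poly_pCons_hom eq_neg_iff_add_eq_0)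
  then show thesis
    using that \<alpha> by blast
qed

lemma cofactor_dvd_degree_of_irreducible_factor:
  fixes q :: "rat poly"
  assumes P: "property_P n b" and b: "b > 0" and n: "n = m * k" "n > 0"
    and q: "irreducible q" "q dvd monom 1 n + [:of_nat b ^ m:]"
  shows "k dvd degree q"
proof -
  obtain r where "monom 1 n + [:of_nat b ^ m:] = q * r"
    using q(2) by (elim dvdE)
  moreover have "(monom 1 n + [:of_nat b ^ m:] :: rat poly) = map_poly of_int (monom 1 n + [:int b ^ m:])"
    using map_poly_of_int_binomial[where 'a = rat, of n "int b ^ m"] by simp
  ultimately obtain g h where gh: "monom 1 n + [:int b ^ m:] = g * h" "degree g = degree q"
    using rat_to_int_factor[of "monom 1 n + [:int b ^ m:]" q r] by auto
  define c where "c = nat \<bar>coeff g 0\<bar>"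
  have "int (c ^ n) = int ((b ^ m) ^ degree q)"
    using abs_coeff_0_power_of_binomial_factor[OF gh(1) n(2)] gh(2) b by (simp add: c_def)
  then have "(c ^ k) ^ m = (b ^ degree q) ^ m"
    unfolding of_nat_eq_iff n by (simp add: ac_simps flip: power_mult)
  moreover have "m > 0"
    using n by simp
  ultimately have "c ^ k = b ^ degree q"
    by (simp add: power_eq_iff_eq_base)
  then show ?thesis
    using property_P_power_eq_imp_dvd[OF P b] n by simp
qed

lemma pow2_dvd_degree_of_root:
  fixes q :: "rat poly" and \<alpha> :: complex and a :: rat and c :: int
  assumes q: "irreducible q" "poly (map_poly of_rat q) \<alpha> = 0"
    and s: "s \<ge> 1" and n: "n = 2 ^ s * w" and c: "c mod 4 = 1" and a: "a \<noteq> 0"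
    and \<alpha>: "\<alpha> ^ n = - (of_rat a ^ 2 ^ s * of_int c)"
  shows "2 ^ s dvd degree q"
proof -
  define P :: "rat poly" where "P = monom 1 (2 ^ s) + [:of_int c:]"
  define \<gamma> where "\<gamma> = of_rat (inverse a) * \<alpha> ^ w"
  have "(\<alpha> ^ w) ^ 2 ^ s = \<alpha> ^ n"
    unfolding n by (simp only: mult.commute flip: power_mult)
  then have "\<gamma> ^ 2 ^ s = inverse (of_rat a ^ 2 ^ s) * \<alpha> ^ n"
    by (simp add: \<gamma>_def power_mult_distrib of_rat_inverse power_inverse)
  also have "\<dots> = - of_int c"
    using a by (simp add: \<alpha>)
  finally have "poly (map_poly of_rat P) \<gamma> = 0"
    by (simp add: P_def map_poly_monom poly_monom of_rat_hom.map_poly_hom_add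
        of_rat_hom.map_poly_pCons_hom)
  moreover have "irreducible P"
    unfolding P_def by (rule irreducible_binomial_pow2[OF s c])
  moreover have "\<gamma> \<in> C.simple_extension \<rat> \<alpha>"
    unfolding \<gamma>_def by (rule of_rat_mult_power_in_simple_extension)
  ultimately have "degree P dvd degree q"
    using degree_dvd_of_root_in_simple_extension[OF q] by blast
  then show ?thesis
    using s by (simp add: P_def degree_add_eq_left degree_monom_eq)
qed

lemma dvd_degree_of_root_of_binomial:
  fixes q :: "rat poly" and \<alpha> :: complex
  assumes q: "irreducible q" "poly (map_poly of_rat q) \<alpha> = 0"
    and \<alpha>: "\<alpha> ^ n = - (of_nat b ^ m)"
    and r: "r \<ge> 1" and m: "m = 2 ^ r" and n: "n = m * k" "n > 0" and b: "b > 0"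
    and k: "k dvd degree q" and odd: "odd b \<or> odd k"
  shows "n dvd degree q"
  using odd
proof
  assume "odd b"
  define e where "e = multiplicity 2 n"
  have "n \<noteq> 0" "\<not> is_unit (2::nat)"
    using n(2) by simp_all
  note multiplicity = multiplicity_decompose'[OF this] power_dvd_iff_le_multiplicity[OF this]
  obtain w where w: "n = 2 ^ e * w" "odd w"
    using multiplicity(1) unfolding e_def by blast
  have "2 ^ r dvd n"
    using n m by simp
  then have "r \<le> e"
    unfolding e_def multiplicity(2) .
  have "e \<ge> 1"
    using \<open>r \<le> e\<close> r by simp
  moreover have "int b ^ m mod 4 = 1"
    using \<open>odd b\<close> r m by (simp add: odd_power_even_mod_4)
  moreover have "\<alpha> ^ n = - (of_rat 1 ^ 2 ^ e * of_int (int b ^ m))"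
    using \<alpha> by simp
  ultimately have "2 ^ e dvd degree q"
    using pow2_dvd_degree_of_root[OF q _ w(1) _ one_neq_zero] by blast
  moreover have "w dvd k"
  proof -
    have "w dvd 2 ^ r * k"
      using w(1) n m by (metis dvd_triv_right)
    moreover have "Rings.coprime w (2 ^ r)"
      using w(2) by simp
    ultimately show ?thesis
      using coprime_dvd_mult_right_iff by blast
  qed
  then have "w dvd degree q"
    using k by (rule dvd_trans)
  moreover have "Rings.coprime (2 ^ e) w"
    using w(2) by simp
  ultimately show ?thesis
    unfolding w(1) by (simp add: divides_mult)
next
  assume "odd k"
  have "n = 2 ^ r * k" "(1::int) mod 4 = 1" "(of_nat b :: rat) \<noteq> 0"
    using n m b by simp_all
  moreover have "\<alpha> ^ n = - (of_rat (of_nat b) ^ 2 ^ r * of_int 1)"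
    using \<alpha> m by simp
  ultimately have "m dvd degree q"
    using pow2_dvd_degree_of_root[OF q r] m by blast
  moreover have "Rings.coprime m k"
    using \<open>odd k\<close> m by simp
  ultimately show ?thesis
    unfolding n(1) using k by (simp add: divides_mult)
qed

theorem corollary2:
  fixes r n b m :: nat
  assumes "r \<ge> 1" and "m = 2 ^ r" and "n > 0" and "m dvd n"
    and "b > 0" and "property_P n b"
    and "reducible_Z (monom 1 n + [:int b ^ m:])"
  shows "even b \<and> even (n div m)"
proof (rule ccontr)
  assume "\<not> (even b \<and> even (n div m))"
  then have odd: "odd b \<or> odd (n div m)"
    by simp
  have n: "n = m * (n div m)"
    using assms(4) by simp
  obtain q :: "rat poly" where q: "irreducible q" "q dvd monom 1 n + [:of_nat b ^ m:]" "degree q < n"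
    using reducible_binomial_imp_irreducible_factor[OF assms(7,3)] by auto
  obtain \<alpha> :: complex where \<alpha>: "poly (map_poly of_rat q) \<alpha> = 0" "\<alpha> ^ n = - (of_nat b ^ m)"
    using root_of_binomial_factor[OF q(1,2)] by (auto simp: of_rat_power)
  moreover have "n div m dvd degree q"
    using cofactor_dvd_degree_of_irreducible_factor[OF assms(6,5) n assms(3) q(1,2)] .
  ultimately have "n dvd degree q"
    using dvd_degree_of_root_of_binomial[OF q(1) \<alpha> assms(1,2) n assms(3,5) _ odd] by blast
  moreover have "degree q \<noteq> 0"
    using q(1) by (auto simp: irreducible_def)
  ultimately show False
    using q(3) by (simp add: nat_dvd_not_less)
qed

end
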